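(* Let $n \geq 1$ be an integer and consider Nim on the hypercube $Q_n$ in which every edge has weight $1$, with the playing piece $\Delta$ starting at a vertex. Then the first player $P_1$ has a winning strategy if and only if $n$ is odd.
   Context: Nim on a graph: two players agree on a finite simple undirected graph $G$ whose edges carry positive integer weights, and a starting vertex on which a playing piece $\Delta$ is placed. Players $P_1$ (who moves first) and $P_2$ alternate. On a turn, the player chooses an edge of positive weight incident with the vertex currently holding $\Delta$, lowers that edge's weight by a positive integer amount, and moves $\Delta$ to the other endpoint of that edge. Edges of weight $0$ are no longer playable. A player who cannot move loses. The hypercube $Q_n$ has as vertices the binary $n$-tuples, two being adjacent iff they differ in exactly one coordinate. *)

theory Defs
  imports Main
begin

text \<open>The graph is given by a (symmetric, irreflexive) adjacency
relation E; the edge weights by a function w, where w x y is the weight of the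
edge {x,y} (kept symmetric by moves).\<close>

type_synonym 'a nim_pos = "('a \<Rightarrow> 'a \<Rightarrow> nat) \<times> 'a"

definition nim_move :: "('a \<Rightarrow> 'a \<Rightarrow> bool) \<Rightarrow> 'a nim_pos \<Rightarrow> 'a nim_pos \<Rightarrow> bool" where
  "nim_move E p q \<longleftrightarrow>
     (let w = fst p; v = snd p; u = snd q in
        E v u \<and> 0 < w v u \<and>
        (\<exists>k. k < w v u \<and> fst q = w(v := (w v)(u := k), u := (w u)(v := k))))"

text \<open>N-positions (the player to move has a winning strategy) and
P-positions (the player to move loses), defined mutually inductively.
A player who cannot move loses.\<close>

inductive nim_win :: "('a \<Rightarrow> 'a \<Rightarrow> bool) \<Rightarrow> 'a nim_pos \<Rightarrow> bool"
  and nim_lose :: "('a \<Rightarrow> 'a \<Rightarrow> bool) \<Rightarrow> 'a nim_pos \<Rightarrow> bool"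
  for E where
  win: "nim_move E p q \<Longrightarrow> nim_lose E q \<Longrightarrow> nim_win E p"
| lose: "(\<And>q. nim_move E p q \<Longrightarrow> nim_win E q) \<Longrightarrow> nim_lose E p"

definition hypercube_vertices :: "nat \<Rightarrow> bool list set" where
  "hypercube_vertices n = {xs. length xs = n}"

definition hypercube_adj :: "nat \<Rightarrow> bool list \<Rightarrow> bool list \<Rightarrow> bool" where
  "hypercube_adj n xs ys \<longleftrightarrow> length xs = n \<and> length ys = n \<and>
     card {i. i < n \<and> xs ! i \<noteq> ys ! i} = 1"

definition unit_weights :: "nat \<Rightarrow> bool list \<Rightarrow> bool list \<Rightarrow> nat" where
  "unit_weights n xs ys = (if hypercube_adj n xs ys then 1 else 0)"

end

theory Submission
  imports Defs "HOL-Library.Z2" "HOL-Library.Disjoint_Sets"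
begin

text \<open>With unit weights every move deletes the edge it uses. Call a vertex set D a trap if no
live edge lies inside D and every vertex outside D has an even number of live edges into D.
A player whose piece sits in a trap loses: any move leaves D along an edge to some u \<notin> D,
after which u has an odd, hence positive, number of live edges into D, and the opponent moves
back into D along one of them, which restores the trap. In Q_n with n even, the vertices whose
Hamming weight has the parity of the starting vertex form a trap (each vertex outside has all
n of its neighbours inside). For n odd, after an arbitrary first move from v the neighbourhood
of v is a trap: v itself keeps n - 1 live edges into it, and any other vertex has 0 or 2
common neighbours with v.\<close>

definition delete_edge :: "('a \<Rightarrow> 'a \<Rightarrow> nat) \<Rightarrow> 'a \<Rightarrow> 'a \<Rightarrow> 'a \<Rightarrow> 'a \<Rightarrow> nat" where
  "delete_edge w v u = w(v := (w v)(u := 0), u := (w u)(v := 0))"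

lemma delete_edge_apply:
  "delete_edge w v u a b = (if (a = v \<and> b = u) \<or> (a = u \<and> b = v) then 0 else w a b)"
  by (auto simp: delete_edge_def)

lemma nim_move_delete_edge:
  "E x u \<Longrightarrow> 0 < w x u \<Longrightarrow> nim_move E (w, x) (delete_edge w x u, u)"
  unfolding nim_move_def delete_edge_def Let_def by auto

lemma nim_move_unit_weightsD:
  assumes "nim_move E (w, x) (w', u)" and "\<And>a b. w a b \<le> 1"
  shows "E x u \<and> w x u = 1 \<and> w' = delete_edge w x u"
proof -
  obtain k where "E x u" "k < w x u" "w' = w(x := (w x)(u := k), u := (w u)(x := k))"
    using assms(1) unfolding nim_move_def Let_def by auto
  moreover from this assms(2)[of x u] have "k = 0" by linarith
  ultimately show ?thesis
    using assms(2)[of x u] unfolding delete_edge_def by auto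
qed

lemma nim_win_not_lose: "nim_win E p \<Longrightarrow> \<not> nim_lose E p"
proof -
  have "(nim_win E p \<longrightarrow> \<not> nim_lose E p) \<and> (nim_lose E q \<longrightarrow> \<not> nim_win E q)" for q
  proof (induction rule: nim_win_nim_lose.induct)
    case (win p q)
    then show ?case by (meson nim_lose.cases)
  next
    case (lose p)
    then show ?case by (meson nim_win.cases)
  qed
  then show "nim_win E p \<Longrightarrow> \<not> nim_lose E p" by blast
qed

definition nim_trap :: "('a \<Rightarrow> 'a \<Rightarrow> bool) \<Rightarrow> 'a set \<Rightarrow> ('a \<Rightarrow> 'a \<Rightarrow> nat) \<Rightarrow> bool" where
  "nim_trap E D w \<longleftrightarrow>
     (\<forall>a b. w a b \<le> 1 \<and> w a b = w b a) \<and>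
     (\<forall>a\<in>D. \<forall>b\<in>D. \<not> (E a b \<and> 0 < w a b)) \<and>
     (\<forall>u. u \<notin> D \<longrightarrow> even (card {y\<in>D. E u y \<and> 0 < w u y}))"

lemma nim_trap_delete_edges:
  assumes trap: "nim_trap E D w" and fin: "finite {y. E u y}"
    and "x \<in> D" "y \<in> D" "x \<noteq> y" "u \<notin> D"
    and ux: "E u x" "0 < w u x" and uy: "E u y" "0 < w u y"
  shows "nim_trap E D (delete_edge (delete_edge w x u) u y)"
proof -
  let ?w = "delete_edge (delete_edge w x u) u y"
  have w_eq: "?w a b = (if (a = u \<and> (b = x \<or> b = y)) \<or> (b = u \<and> (a = x \<or> a = y)) then 0 else w a b)"
    for a b
    using \<open>u \<notin> D\<close> \<open>x \<in> D\<close> \<open>y \<in> D\<close> unfolding delete_edge_apply by (smt (verit))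
  define S where "S = {z\<in>D. E u z \<and> 0 < w u z}"
  have "finite S" by (rule finite_subset[OF _ fin]) (auto simp: S_def)
  have "{x, y} \<subseteq> S" using \<open>x \<in> D\<close> \<open>y \<in> D\<close> ux uy by (auto simp: S_def)
  have even_u: "even (card {z\<in>D. E u z \<and> 0 < ?w u z})"
  proof -
    have "even (card S)" using trap \<open>u \<notin> D\<close> unfolding nim_trap_def S_def by blast
    moreover have "card {x, y} \<le> card S" using \<open>finite S\<close> \<open>{x, y} \<subseteq> S\<close> by (rule card_mono)
    moreover have "{z\<in>D. E u z \<and> 0 < ?w u z} = S - {x, y}"
      using \<open>u \<notin> D\<close> by (auto simp: S_def w_eq)
    ultimately show ?thesis
      using \<open>x \<noteq> y\<close> \<open>finite S\<close> \<open>{x, y} \<subseteq> S\<close> by (simp add: card_Diff_subset)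
  qed
  have other: "{z\<in>D. E u' z \<and> 0 < ?w u' z} = {z\<in>D. E u' z \<and> 0 < w u' z}" if "u' \<noteq> u" for u'
    using that \<open>u \<notin> D\<close> by (auto simp: w_eq)
  show ?thesis
    unfolding nim_trap_def
  proof (intro conjI allI impI ballI)
    fix a b
    show "?w a b \<le> 1" "?w a b = ?w b a"
      using trap unfolding nim_trap_def by (auto simp: w_eq)
  next
    fix a b assume "a \<in> D" "b \<in> D"
    then show "\<not> (E a b \<and> 0 < ?w a b)"
      using trap unfolding nim_trap_def by (auto simp: w_eq)
  next
    fix u' assume "u' \<notin> D"
    then show "even (card {z\<in>D. E u' z \<and> 0 < ?w u' z})"
      using trap even_u other unfolding nim_trap_def by (cases "u' = u") auto
  qed
qed

lemma nim_trap_reply: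
  assumes symE: "\<And>a b. E a b \<Longrightarrow> E b a" and fin: "finite {y. E u y}"
    and trap: "nim_trap E D w" and "x \<in> D" and "E x u" and "0 < w x u"
  shows "\<exists>y\<in>D. E u y \<and> 0 < delete_edge w x u u y \<and>
    nim_trap E D (delete_edge (delete_edge w x u) u y)"
proof -
  have "u \<notin> D"
    using trap \<open>x \<in> D\<close> \<open>E x u\<close> \<open>0 < w x u\<close> unfolding nim_trap_def by blast
  have "0 < w u x"
    using trap \<open>0 < w x u\<close> unfolding nim_trap_def by metis
  define S where "S = {y\<in>D. E u y \<and> 0 < w u y}"
  have "x \<in> S" using \<open>x \<in> D\<close> symE[OF \<open>E x u\<close>] \<open>0 < w u x\<close> by (simp add: S_def)
  moreover have "even (card S)" using trap \<open>u \<notin> D\<close> unfolding nim_trap_def S_def by blast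
  ultimately have "S \<noteq> {x}" by (intro notI) simp
  with \<open>x \<in> S\<close> obtain y where "y \<in> S" "y \<noteq> x" by blast
  then have "y \<in> D" "E u y" "0 < w u y" by (auto simp: S_def)
  moreover have "nim_trap E D (delete_edge (delete_edge w x u) u y)"
    using \<open>y \<noteq> x\<close> by (intro nim_trap_delete_edges[OF trap fin \<open>x \<in> D\<close> \<open>y \<in> D\<close> _ \<open>u \<notin> D\<close>
          symE[OF \<open>E x u\<close>] \<open>0 < w u x\<close> \<open>E u y\<close> \<open>0 < w u y\<close>]) auto
  ultimately show ?thesis
    using \<open>y \<noteq> x\<close> by (auto simp: delete_edge_apply)
qed

definition live_edges :: "('a \<Rightarrow> 'a \<Rightarrow> bool) \<Rightarrow> ('a \<Rightarrow> 'a \<Rightarrow> nat) \<Rightarrow> ('a \<times> 'a) set" where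
  "live_edges E w = {(a, b). E a b \<and> 0 < w a b}"

lemma live_edges_delete_edge_subset: "live_edges E (delete_edge w x u) \<subseteq> live_edges E w"
proof -
  have "delete_edge w x u a b \<le> w a b" for a b by (simp add: delete_edge_apply)
  then show ?thesis by (auto simp: live_edges_def intro: less_le_trans)
qed

lemma card_live_edges_delete_edge_less:
  assumes "finite {(a, b). E a b}" and "E x u" and "0 < w x u"
  shows "card (live_edges E (delete_edge w x u)) < card (live_edges E w)"
proof (rule psubset_card_mono)
  show "finite (live_edges E w)"
    using assms(1) by (rule rev_finite_subset) (auto simp: live_edges_def)
  have "(x, u) \<notin> live_edges E (delete_edge w x u)" "(x, u) \<in> live_edges E w"
    using assms(2,3) by (simp_all add: live_edges_def delete_edge_apply)
  with live_edges_delete_edge_subset[of E w x u]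
  show "live_edges E (delete_edge w x u) \<subset> live_edges E w" by blast
qed

theorem nim_lose_if_trap:
  assumes symE: "\<And>a b. E a b \<Longrightarrow> E b a" and fin: "finite {(a, b). E a b}"
    and "nim_trap E D w" and "x \<in> D"
  shows "nim_lose E (w, x)"
  using assms(3,4)
proof (induction "card (live_edges E w)" arbitrary: w x rule: less_induct)
  case less
  show ?case
  proof (rule nim_win_nim_lose.lose)
    fix q assume "nim_move E (w, x) q"
    moreover have "\<And>a b. w a b \<le> 1" using less.prems(1) unfolding nim_trap_def by blast
    ultimately obtain u where q: "q = (delete_edge w x u, u)" and "E x u" "0 < w x u"
      by (metis nim_move_unit_weightsD prod.collapse zero_less_one)
    let ?w = "delete_edge w x u"
    have "finite {y. E u y}"
      by (rule finite_subset[OF _ finite_imageI[OF fin, of snd]]) (auto simp: image_iff)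
    then obtain y where "y \<in> D" "E u y" "0 < ?w u y" and trap: "nim_trap E D (delete_edge ?w u y)"
      using nim_trap_reply[OF symE _ less.prems \<open>E x u\<close> \<open>0 < w x u\<close>] by blast
    have "card (live_edges E (delete_edge ?w u y)) \<le> card (live_edges E ?w)"
      by (rule card_mono[OF rev_finite_subset[OF fin] live_edges_delete_edge_subset])
        (auto simp: live_edges_def)
    also have "\<dots> < card (live_edges E w)"
      using fin \<open>E x u\<close> \<open>0 < w x u\<close> by (rule card_live_edges_delete_edge_less)
    finally have "nim_lose E (delete_edge ?w u y, y)"
      using less.hyps trap \<open>y \<in> D\<close> by blast
    moreover have "nim_move E q (delete_edge ?w u y, y)"
      unfolding q using \<open>E u y\<close> \<open>0 < ?w u y\<close> by (rule nim_move_delete_edge)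
    ultimately show "nim_win E q" by (blast intro: nim_win_nim_lose.win)
  qed
qed

lemma even_card_involution:
  assumes "\<And>x. x \<in> X \<Longrightarrow> h x \<in> X" "\<And>x. x \<in> X \<Longrightarrow> h (h x) = x"
    and "\<And>x. x \<in> X \<Longrightarrow> h x \<noteq> x"
  shows "even (card X)"
proof -
  \<comment> \<open>count in characteristic 2, where the library's involution lemma applies\<close>
  have "(\<Sum>x\<in>X. 1 :: bit) = 0"
    by (rule sum_involution_eq_0[where h = h]) (use assms in auto)
  then have "of_nat (card X) = (0 :: bit)" by simp
  then show ?thesis
    by (metis even_of_nat even_zero)
qed

definition flip_bit :: "bool list \<Rightarrow> nat \<Rightarrow> bool list" where
  "flip_bit xs i = xs[i := \<not> xs ! i]"

definition hamming_weight :: "bool list \<Rightarrow> nat" where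
  "hamming_weight xs = card {k. k < length xs \<and> xs ! k}"

lemma hypercube_adj_sym: "hypercube_adj n a b \<Longrightarrow> hypercube_adj n b a"
proof -
  have "{i. i < n \<and> a ! i \<noteq> b ! i} = {i. i < n \<and> b ! i \<noteq> a ! i}" by auto
  then show "hypercube_adj n a b \<Longrightarrow> hypercube_adj n b a" by (simp add: hypercube_adj_def)
qed

lemma hypercube_adj_length: "hypercube_adj n a b \<Longrightarrow> length a = n \<and> length b = n"
  unfolding hypercube_adj_def by simp

lemma finite_hypercube_adj: "finite {(a, b). hypercube_adj n a b}"
proof (rule finite_subset)
  let ?V = "{xs :: bool list. set xs \<subseteq> UNIV \<and> length xs = n}"
  show "{(a, b). hypercube_adj n a b} \<subseteq> ?V \<times> ?V"
    by (auto simp: hypercube_adj_def)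
  show "finite (?V \<times> ?V)"
    using finite_lists_length_eq[of "UNIV :: bool set" n] by (simp add: finite_cartesian_product)
qed

lemma hypercube_adj_flip_bit: "length u = n \<Longrightarrow> i < n \<Longrightarrow> hypercube_adj n u (flip_bit u i)"
proof -
  assume "length u = n" "i < n"
  then have "{k. k < n \<and> u ! k \<noteq> flip_bit u i ! k} = {i}"
    by (auto simp: flip_bit_def nth_list_update)
  with \<open>length u = n\<close> show ?thesis by (simp add: hypercube_adj_def flip_bit_def)
qed

lemma hypercube_adj_imp_flip_bit:
  assumes "hypercube_adj n u y"
  shows "\<exists>i<n. y = flip_bit u i"
proof -
  have len: "length u = n" "length y = n" using assms by (simp_all add: hypercube_adj_def)
  obtain i where i: "{k. k < n \<and> u ! k \<noteq> y ! k} = {i}"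
    using assms card_1_singleton_iff[of "{k. k < n \<and> u ! k \<noteq> y ! k}"]
    unfolding hypercube_adj_def by auto
  then have "i < n" and "u ! i \<noteq> y ! i" by (metis (mono_tags) mem_Collect_eq singletonI)+
  have "u ! k = y ! k" if "k < n" "k \<noteq> i" for k
    using i that by blast
  then have "y ! k = flip_bit u i ! k" if "k < n" for k
    using that len \<open>u ! i \<noteq> y ! i\<close> by (cases "k = i") (auto simp: flip_bit_def)
  then have "y = flip_bit u i"
    using len by (intro nth_equalityI) (simp_all add: flip_bit_def)
  with \<open>i < n\<close> show ?thesis by blast
qed

lemma hypercube_neighbours: "length u = n \<Longrightarrow> {y. hypercube_adj n u y} = flip_bit u ` {..<n}"
  using hypercube_adj_flip_bit hypercube_adj_imp_flip_bit by fastforce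

lemma card_hypercube_neighbours: "length u = n \<Longrightarrow> card {y. hypercube_adj n u y} = n"
proof -
  assume "length u = n"
  then have "inj_on (flip_bit u) {..<n}"
    by (intro inj_onI) (metis flip_bit_def lessThan_iff nth_list_update_eq nth_list_update_neq)
  with \<open>length u = n\<close> show ?thesis by (simp add: hypercube_neighbours card_image)
qed

lemma even_hamming_weight_flip_bit:
  assumes "i < length xs"
  shows "even (hamming_weight (flip_bit xs i)) \<longleftrightarrow> odd (hamming_weight xs)"
proof -
  let ?A = "{k. k < length xs \<and> xs ! k}"
  have "finite ?A" by simp
  show ?thesis
  proof (cases "xs ! i")
    case True
    then have "{k. k < length (flip_bit xs i) \<and> flip_bit xs i ! k} = ?A - {i}" and "i \<in> ?A"
      using assms by (auto simp: flip_bit_def nth_list_update)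
    with \<open>finite ?A\<close> have "hamming_weight xs = Suc (hamming_weight (flip_bit xs i))"
      unfolding hamming_weight_def by (metis card_Suc_Diff1)
    then show ?thesis by simp
  next
    case False
    then have "{k. k < length (flip_bit xs i) \<and> flip_bit xs i ! k} = insert i ?A" and "i \<notin> ?A"
      using assms by (auto simp: flip_bit_def nth_list_update)
    with \<open>finite ?A\<close> have "hamming_weight (flip_bit xs i) = Suc (hamming_weight xs)"
      unfolding hamming_weight_def by simp
    then show ?thesis by simp
  qed
qed

lemma hypercube_adj_parity: "hypercube_adj n a b \<Longrightarrow> even (hamming_weight a) \<longleftrightarrow> odd (hamming_weight b)"
  using hypercube_adj_imp_flip_bit hypercube_adj_length even_hamming_weight_flip_bit by metis

lemma even_card_common_hypercube_neighbours:
  assumes "u \<noteq> v"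
  shows "even (card {y. hypercube_adj n v y \<and> hypercube_adj n u y})"
proof (rule even_card_involution)
  \<comment> \<open>y is sent to u + v + y, coordinatewise over GF(2)\<close>
  define h where "h y = map (\<lambda>k. u ! k \<noteq> (v ! k \<noteq> y ! k)) [0..<n]" for y
  have h_nth: "length (h y) = n" "k < n \<Longrightarrow> h y ! k \<longleftrightarrow> u ! k \<noteq> (v ! k \<noteq> y ! k)" for y k
    by (simp_all add: h_def)
  fix y assume y: "y \<in> {y. hypercube_adj n v y \<and> hypercube_adj n u y}"
  then have len: "length u = n" "length v = n" "length y = n"
    by (simp_all add: hypercube_adj_def)
  have "{k. k < n \<and> v ! k \<noteq> h y ! k} = {k. k < n \<and> u ! k \<noteq> y ! k}"
    and "{k. k < n \<and> u ! k \<noteq> h y ! k} = {k. k < n \<and> v ! k \<noteq> y ! k}"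
    by (auto simp: h_nth)
  with y len h_nth(1) show "h y \<in> {y. hypercube_adj n v y \<and> hypercube_adj n u y}"
    by (simp add: hypercube_adj_def)
  show "h (h y) = y"
    using len h_nth by (intro nth_equalityI) auto
  show "h y \<noteq> y"
  proof
    assume "h y = y"
    then have "u ! k = v ! k" if "k < n" for k
      using h_nth(2)[OF that, of y] by (simp only:) blast
    with len have "u = v" by (simp add: nth_equalityI)
    with \<open>u \<noteq> v\<close> show False ..
  qed
qed

lemma unit_weights_pos_iff: "0 < unit_weights n a b \<longleftrightarrow> hypercube_adj n a b"
  by (simp add: unit_weights_def)

lemma unit_weights_le_one_sym: "unit_weights n a b \<le> 1 \<and> unit_weights n a b = unit_weights n b a"
  using hypercube_adj_sym by (auto simp: unit_weights_def)

lemma even_card_hypercube_neighbours: "even n \<Longrightarrow> even (card {y. hypercube_adj n u y})"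
  by (cases "length u = n") (simp_all add: card_hypercube_neighbours, simp add: hypercube_adj_def)

lemma hypercube_parity_class_trap:
  assumes "even n"
  shows "nim_trap (hypercube_adj n)
    {a. length a = n \<and> (even (hamming_weight a) \<longleftrightarrow> even (hamming_weight v))} (unit_weights n)"
    (is "nim_trap _ ?D _")
  unfolding nim_trap_def
proof (intro conjI allI impI ballI)
  fix a b
  show "unit_weights n a b \<le> 1" "unit_weights n a b = unit_weights n b a"
    using unit_weights_le_one_sym by blast+
next
  fix a b assume "a \<in> ?D" "b \<in> ?D"
  then show "\<not> (hypercube_adj n a b \<and> 0 < unit_weights n a b)"
    using hypercube_adj_parity[of n a b] by auto
next
  fix u assume "u \<notin> ?D"
  then have "{y\<in>?D. hypercube_adj n u y \<and> 0 < unit_weights n u y} = {y. hypercube_adj n u y}"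
    using hypercube_adj_parity[of n u] hypercube_adj_length[of n u] by (auto simp: unit_weights_pos_iff)
  then show "even (card {y\<in>?D. hypercube_adj n u y \<and> 0 < unit_weights n u y})"
    using even_card_hypercube_neighbours[OF assms] by simp
qed

lemma hypercube_nim_lose_if_even:
  assumes "even n" and "length v = n"
  shows "nim_lose (hypercube_adj n) (unit_weights n, v)"
  using hypercube_parity_class_trap[OF assms(1), of v] assms(2)
  by (intro nim_lose_if_trap[OF hypercube_adj_sym finite_hypercube_adj]) auto

lemma hypercube_neighbourhood_trap:
  assumes "odd n" and "length v = n" and "hypercube_adj n v v'"
  shows "nim_trap (hypercube_adj n) {y. hypercube_adj n v y} (delete_edge (unit_weights n) v v')"
    (is "nim_trap _ ?D ?w")
  unfolding nim_trap_def
proof (intro conjI allI impI ballI)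
  fix a b
  show "?w a b \<le> 1" "?w a b = ?w b a"
    using unit_weights_le_one_sym[of n a b] by (auto simp: delete_edge_apply)
next
  fix a b assume "a \<in> ?D" "b \<in> ?D"
  then show "\<not> (hypercube_adj n a b \<and> 0 < ?w a b)"
    using hypercube_adj_parity[of n a b] hypercube_adj_parity[of n v] by auto
next
  fix u assume "u \<notin> ?D"
  show "even (card {y\<in>?D. hypercube_adj n u y \<and> 0 < ?w u y})"
  proof (cases "u = v")
    case True
    then have "{y\<in>?D. hypercube_adj n u y \<and> 0 < ?w u y} = ?D - {v'}"
      by (auto simp: delete_edge_apply unit_weights_pos_iff)
    moreover have "finite ?D" using assms(2) by (simp add: hypercube_neighbours)
    moreover have "card ?D = n" using assms(2) by (rule card_hypercube_neighbours)
    ultimately show ?thesis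
      using assms(1,3) by (simp add: odd_pos)
  next
    case False
    with \<open>u \<notin> ?D\<close> assms(3)
    have "{y\<in>?D. hypercube_adj n u y \<and> 0 < ?w u y} = {y. hypercube_adj n v y \<and> hypercube_adj n u y}"
      by (auto simp: delete_edge_apply unit_weights_pos_iff)
    then show ?thesis
      using even_card_common_hypercube_neighbours[OF False] by simp
  qed
qed

lemma hypercube_nim_win_if_odd:
  assumes "odd n" and "length v = n"
  shows "nim_win (hypercube_adj n) (unit_weights n, v)"
proof -
  let ?v' = "flip_bit v 0"
  have "hypercube_adj n v ?v'"
    using assms by (auto intro: hypercube_adj_flip_bit odd_pos)
  then have "nim_move (hypercube_adj n) (unit_weights n, v) (delete_edge (unit_weights n) v ?v', ?v')"
    by (intro nim_move_delete_edge) (simp_all add: unit_weights_pos_iff)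
  moreover have "nim_lose (hypercube_adj n) (delete_edge (unit_weights n) v ?v', ?v')"
    using hypercube_neighbourhood_trap[OF assms \<open>hypercube_adj n v ?v'\<close>] \<open>hypercube_adj n v ?v'\<close>
    by (intro nim_lose_if_trap[OF hypercube_adj_sym finite_hypercube_adj]) auto
  ultimately show ?thesis by (rule nim_win_nim_lose.win)
qed

theorem mainTheorem4:
  fixes n :: nat and v :: "bool list"
  assumes "n \<ge> 1" and "v \<in> hypercube_vertices n"
  shows "nim_win (hypercube_adj n) (unit_weights n, v) \<longleftrightarrow> odd n"
proof -
  have "length v = n" using assms(2) by (simp add: hypercube_vertices_def)
  then show ?thesis
    using hypercube_nim_win_if_odd hypercube_nim_lose_if_even nim_win_not_lose by blast
qed

end
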